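(* For all integers $3\le j<k$ there exists $\delta_{j,k}>0$ such that $$\lim_{n\to\infty,\ k\mid n}\ \sum_{b=1}^{\lfloor\delta_{j,k}n\rfloor}\ \sum_{a=0}^{n-b}E_{n,j,k}\!\left(\tfrac an,\tfrac bn\right)=0.$$
   Context: Let $g_k(x,y)=(1+x+y)^k-ky-\bigl((1+x)^k-1\bigr)$. For $n$ a multiple of $k$ and integers $a,b\ge0$ with $a+b\le n$, $E_{n,j,k}(a/n,b/n)=\binom{n}{a,\,b,\,n-a-b}S_{n,j,k}(a,b)\big/\binom{nj}{ja,\,jb,\,j(n-a-b)}$ with $S_{n,j,k}(a,b)$ the coefficient of $x^{ja}y^{jb}$ in $g_k(x,y)^{nj/k}$. This is the average number of LM1 stopping sets with $a$ correct and $b$ incorrect unverified variable nodes in a random $(j,k)$-regular LDPC code of length $n$. *)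

theory Defs
  imports Complex_Main "HOL-Computational_Algebra.Polynomial"
begin

text \<open>Bivariate polynomials in x and y are represented as int poly poly:
  the outer variable is y, the inner variable (coefficients) is x.\<close>

definition gpoly :: "nat \<Rightarrow> int poly poly" where
  "gpoly k = [:[:1, 1:], 1:] ^ k - of_nat k * [:0, 1:] - [: [:1, 1:] ^ k - 1 :]"

definition Scoef :: "nat \<Rightarrow> nat \<Rightarrow> nat \<Rightarrow> nat \<Rightarrow> nat \<Rightarrow> int" where
  "Scoef n j k a b = coeff (coeff (gpoly k ^ (n * j div k)) (j * b)) (j * a)"

definition trinom :: "nat \<Rightarrow> nat \<Rightarrow> nat \<Rightarrow> real" where
  "trinom m a b = fact m / (fact a * fact b * fact (m - a - b))"

text \<open>E_{n,j,k}(a/n, b/n), indexed by the integers a, b.\<close>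
definition Eavg :: "nat \<Rightarrow> nat \<Rightarrow> nat \<Rightarrow> nat \<Rightarrow> nat \<Rightarrow> real" where
  "Eavg n j k a b = trinom n a b * real_of_int (Scoef n j k a b) / trinom (n * j) (j * a) (j * b)"

end

theory Submission
  imports Defs
begin

text \<open>
  Every coefficient of a polynomial with nonnegative coefficients is bounded by
  the value of the polynomial at any positive point divided by the corresponding monomial.
  Since g_k has nonnegative coefficients, evaluating g_k^(nj/k) at x = y = t with
  t = sqrt (b/n) gives S(a,b) t^(j(a+b)) <= g_k(t,t)^(nj/k) <= exp(2 k^2 3^k)^b, because
  g_k(t,t) = 1 + O(t^2).  Elementary bounds on factorials control the two trinomial
  coefficients, and since S(a,b) vanishes unless a <= (k-1) b we get
  E(a,b) <= (C t)^(a+b) for an explicit constant C = decay_const j k.  For b <= delta n the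
  quantity C t is at most 1/2, so the sum over a is at most 2 (C t)^b and the sum over b is
  at most 8 C / sqrt n, which tends to 0.
\<close>

lemma map_poly_mult_hom:
  fixes f :: "'a::comm_semiring_1 \<Rightarrow> 'b::comm_semiring_1"
  assumes "f 0 = 0" "\<And>a b. f (a + b) = f a + f b" "\<And>a b. f (a * b) = f a * f b"
  shows "map_poly f (p * q) = map_poly f p * map_poly f q"
proof (rule poly_eqI)
  fix n
  have "f (\<Sum>i\<le>n. coeff p i * coeff q (n - i)) = (\<Sum>i\<le>n. f (coeff p i * coeff q (n - i)))"
    using sum_comp_morphism[of f "\<lambda>i. coeff p i * coeff q (n - i)" "{..n}", OF assms(1,2)]
    by (simp add: comp_def)
  then show "coeff (map_poly f (p * q)) n = coeff (map_poly f p * map_poly f q) n"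
    by (simp add: coeff_map_poly coeff_mult assms)
qed

lemma map_poly_add_hom:
  assumes "f 0 = 0" "\<And>a b. f (a + b) = f a + f b"
  shows "map_poly f (p + q) = map_poly f p + map_poly f q"
  by (rule poly_eqI) (simp add: coeff_map_poly assms)

lemma map_poly_diff_hom:
  fixes f :: "'a::comm_ring_1 \<Rightarrow> 'b::comm_ring_1"
  assumes "f 0 = 0" "\<And>a b. f (a - b) = f a - f b"
  shows "map_poly f (p - q) = map_poly f p - map_poly f q"
  by (rule poly_eqI) (simp add: coeff_map_poly assms)

lemma map_poly_power_hom:
  fixes f :: "'a::comm_semiring_1 \<Rightarrow> 'b::comm_semiring_1"
  assumes "f 0 = 0" "f 1 = 1" "\<And>a b. f (a + b) = f a + f b" "\<And>a b. f (a * b) = f a * f b"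
  shows "map_poly f (p ^ N) = map_poly f p ^ N"
  by (induction N) (simp_all add: assms map_poly_mult_hom)

definition eval1 :: "real \<Rightarrow> int poly \<Rightarrow> real" where
  "eval1 x c = poly (map_poly real_of_int c) x"

definition eval2 :: "real \<Rightarrow> real \<Rightarrow> int poly poly \<Rightarrow> real" where
  "eval2 x y P = poly (map_poly (eval1 x) P) y"

lemma eval1_hom:
  "eval1 x 0 = 0" "eval1 x 1 = 1" "eval1 x (c + d) = eval1 x c + eval1 x d"
  "eval1 x (c - d) = eval1 x c - eval1 x d" "eval1 x (c * d) = eval1 x c * eval1 x d" "eval1 x (c ^ N) = eval1 x c ^ N"
  by (simp_all add: eval1_def map_poly_add_hom map_poly_diff_hom map_poly_mult_hom
      map_poly_power_hom)

lemma eval2_hom: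
  "eval2 x y (P - Q) = eval2 x y P - eval2 x y Q"
  "eval2 x y (P ^ N) = eval2 x y P ^ N"
  by (simp_all add: eval2_def eval1_hom map_poly_diff_hom map_poly_power_hom)

lemma eval2_gpoly: "eval2 x y (gpoly k) = (1 + x + y) ^ k - real k * y - ((1 + x) ^ k - 1)"
proof -
  have "eval1 x [:1, 1:] = 1 + x" "eval1 x (of_nat k) = real k"
    by (simp_all add: eval1_def of_nat_poly map_poly_pCons)
  then have "eval2 x y [:[:1, 1:], 1:] = 1 + x + y" "eval2 x y (of_nat k * [:0, 1:]) = real k * y"
    "eval2 x y [:[:1, 1:] ^ k - 1:] = (1 + x) ^ k - 1"
    by (simp_all add: eval2_def eval1_hom map_poly_pCons of_nat_poly)
  then show ?thesis
    unfolding gpoly_def eval2_hom by simp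
qed

lemma coeff_power_le_poly:
  fixes p :: "'a::linordered_idom poly"
  assumes "\<And>i. 0 \<le> coeff p i" "0 \<le> x"
  shows "coeff p l * x ^ l \<le> poly p x"
proof -
  have "poly p x = (\<Sum>i\<le>max l (degree p). coeff p i * x ^ i)"
    unfolding poly_altdef by (intro sum.mono_neutral_left) (auto simp: coeff_eq_0)
  then show ?thesis
    using assms by (auto intro!: member_le_sum)
qed

lemma coeff_le_eval2:
  assumes "\<And>i l. 0 \<le> coeff (coeff P i) l" "0 \<le> x" "0 \<le> y"
  shows "real_of_int (coeff (coeff P i) l) * x ^ l * y ^ i \<le> eval2 x y P"
proof -
  have inner: "real_of_int (coeff c l) * x ^ l \<le> eval1 x c" if "\<And>l. 0 \<le> coeff c l" for c l
    using coeff_power_le_poly[of "map_poly real_of_int c" x l] that assms(2)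
    by (simp add: eval1_def coeff_map_poly)
  have "eval1 x (coeff P i') \<ge> 0" for i'
  proof -
    have "real_of_int (coeff (coeff P i') 0) \<le> eval1 x (coeff P i')"
      using inner[of "coeff P i'" 0, OF assms(1)] by simp
    then show ?thesis using assms(1)[of i' 0] by linarith
  qed
  then have "eval1 x (coeff P i) * y ^ i \<le> eval2 x y P"
    using coeff_power_le_poly[of "map_poly (eval1 x) P" y i] assms(3)
    by (simp add: eval2_def coeff_map_poly eval1_hom)
  moreover have "real_of_int (coeff (coeff P i) l) * x ^ l * y ^ i \<le> eval1 x (coeff P i) * y ^ i"
    using inner[of "coeff P i" l] assms by (simp add: mult_right_mono)
  ultimately show ?thesis by linarith
qed

lemma coeff_linear_power:
  "coeff ([:a, b:] ^ n) i = of_nat (n choose i) * b ^ i * (a::'a::comm_semiring_1) ^ (n - i)"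
proof (cases "i \<le> n")
  case True
  then show ?thesis by (rule coeff_linear_poly_power)
next
  case False
  have "degree ([:a, b:] ^ n) \<le> n"
    using degree_power_le[of "[:a, b:]" n] by (simp split: if_splits)
  then show ?thesis
    using False by (simp add: coeff_eq_0 binomial_eq_0)
qed

lemma coeff_gpoly: "coeff (coeff (gpoly k) i) l =
   int (k choose i) * int ((k - i) choose l)
   - (if i = 1 \<and> l = 0 then int k else 0)
   - (if i = 0 then int (k choose l) - (if l = 0 then 1 else 0) else 0)"
proof -
  have "coeff (coeff ([:[:1, 1:], 1:] ^ k) i) l = int (k choose i) * int ((k - i) choose l)"
    by (simp add: coeff_linear_power coeff_mult of_nat_poly)
  moreover have "coeff (coeff (of_nat k * [:0, 1:] :: int poly poly) i) l
      = (if i = 1 \<and> l = 0 then int k else 0)"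
    by (simp add: of_nat_poly coeff_pCons split: nat.splits)
  moreover have "coeff (coeff [:[:1, 1:] ^ k - 1:] i) l
      = (if i = 0 then int (k choose l) - (if l = 0 then 1 else 0) else 0)"
    by (simp add: coeff_pCons coeff_linear_power split: nat.splits)
  ultimately show ?thesis
    unfolding gpoly_def by (simp only: coeff_diff)
qed

definition sloped :: "nat \<Rightarrow> int poly poly \<Rightarrow> bool" where
  "sloped d P \<longleftrightarrow>
     (\<forall>i l. 0 \<le> coeff (coeff P i) l \<and> (d * i < l \<longrightarrow> coeff (coeff P i) l = 0))"

lemma sloped_mult:
  assumes P: "sloped d P" and Q: "sloped d Q"
  shows "sloped d (P * Q)"
  unfolding sloped_def
proof (intro allI conjI impI)
  fix i l
  have prod: "coeff (coeff (P * Q) i) l =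
      (\<Sum>r\<le>i. \<Sum>u\<le>l. coeff (coeff P r) u * coeff (coeff Q (i - r)) (l - u))"
    by (simp add: coeff_mult coeff_sum)
  show "0 \<le> coeff (coeff (P * Q) i) l"
    unfolding prod using P Q unfolding sloped_def by (intro sum_nonneg mult_nonneg_nonneg) auto
  assume above: "d * i < l"
  have "coeff (coeff P r) u * coeff (coeff Q (i - r)) (l - u) = 0" if "r \<le> i" "u \<le> l" for r u
  proof (cases "d * r < u")
    case True
    then show ?thesis using P unfolding sloped_def by simp
  next
    case False
    have "d * i = d * r + d * (i - r)"
      using that(1) by (simp add: add_mult_distrib2[symmetric])
    then have "d * (i - r) < l - u" using above False by linarith
    then show ?thesis using Q unfolding sloped_def by simp
  qed
  then show "coeff (coeff (P * Q) i) l = 0"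
    unfolding prod by (auto intro!: sum.neutral)
qed

lemma sloped_power: "sloped d P \<Longrightarrow> sloped d (P ^ N)"
proof (induction N)
  case 0
  then show ?case by (auto simp: sloped_def)
next
  case (Suc N)
  then show ?case by (simp add: sloped_mult)
qed

text \<open>g_k is sloped with slope k - 1: its y^0 part is the constant 1, its y^1 part
  k ((1+x)^(k-1) - 1) has x-degree k - 1, and for i >= 2 its y^i part has x-degree k - i.\<close>

lemma sloped_gpoly: "sloped (k - 1) (gpoly k)"
  unfolding sloped_def
proof (intro allI conjI impI)
  fix i l
  consider "i = 0" | "i = 1" | "2 \<le> (i::nat)" by linarith
  note cases = this
  then show "0 \<le> coeff (coeff (gpoly k) i) l"
    by cases (auto simp: coeff_gpoly)
  assume above: "(k - 1) * i < l"
  from cases show "coeff (coeff (gpoly k) i) l = 0"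
  proof cases
    case 3
    have "(k - 1) * 2 \<le> (k - 1) * i" using 3 by simp
    then have "k - i < l" using above 3 by linarith
    then show ?thesis using 3 by (simp add: coeff_gpoly binomial_eq_0)
  qed (use above in \<open>auto simp: coeff_gpoly binomial_eq_0\<close>)
qed

lemma Scoef_nonneg: "0 \<le> Scoef n j k a b"
  using sloped_power[OF sloped_gpoly] unfolding Scoef_def sloped_def by blast

lemma Scoef_vanish: "(k - 1) * (j * b) < j * a \<Longrightarrow> Scoef n j k a b = 0"
  using sloped_power[OF sloped_gpoly] unfolding Scoef_def sloped_def by blast

lemma Scoef_le_eval:
  assumes "0 \<le> x" "0 \<le> y"
  shows "real_of_int (Scoef n j k a b) * x ^ (j * a) * y ^ (j * b)
    \<le> eval2 x y (gpoly k) ^ (n * j div k)"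
  using coeff_le_eval2[of "gpoly k ^ (n * j div k)" x y "j * b" "j * a"]
    sloped_power[OF sloped_gpoly] assms
  unfolding Scoef_def sloped_def eval2_hom by blast

lemma power_diff_le:
  fixes v w :: real
  assumes "0 \<le> w" "w \<le> v"
  shows "v ^ Suc r - w ^ Suc r \<le> real (Suc r) * (v - w) * v ^ r"
proof (induction r)
  case 0
  then show ?case by simp
next
  case (Suc r)
  have "v ^ Suc (Suc r) - w ^ Suc (Suc r) = v * (v ^ Suc r - w ^ Suc r) + (v - w) * w ^ Suc r"
    by (simp add: algebra_simps)
  also have "\<dots> \<le> v * (real (Suc r) * (v - w) * v ^ r) + (v - w) * v ^ Suc r"
    using Suc assms by (intro add_mono mult_left_mono power_mono) auto
  also have "\<dots> = real (Suc (Suc r)) * (v - w) * v ^ Suc r"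
    by (simp add: algebra_simps)
  finally show ?case .
qed

text \<open>Near the origin g_k is 1 up to a second order term: the linear terms cancel.\<close>

lemma g_near_origin:
  fixes x y :: real
  assumes "0 \<le> x" "x \<le> 1" "0 \<le> y" "y \<le> 1" "2 \<le> k"
  shows "(1 + x + y) ^ k - real k * y - ((1 + x) ^ k - 1) \<le> 1 + real k ^ 2 * 3 ^ k * (y * (x + y))"
proof -
  obtain p where k: "k = Suc (Suc p)" using assms(5) by (metis add_2_eq_Suc le_Suc_ex)
  have diff_top: "(1 + x + y) ^ k - (1 + x) ^ k \<le> real k * y * (1 + x + y) ^ Suc p"
    using power_diff_le[of "1 + x" "1 + x + y" "Suc p"] assms k by simp
  have diff_lower: "(1 + x + y) ^ Suc p - 1 \<le> real (Suc p) * (x + y) * (1 + x + y) ^ p"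
    using power_diff_le[of 1 "1 + x + y" p] assms by simp
  have "(1 + x + y) ^ p \<le> 3 ^ p"
    using assms by (intro power_mono) auto
  also have "(3::real) ^ p \<le> 3 ^ k"
    using k by (intro power_increasing) auto
  finally have power_le_3k: "(1 + x + y) ^ p \<le> 3 ^ k" .
  have "(1 + x + y) ^ k - real k * y - ((1 + x) ^ k - 1) - 1
      \<le> real k * y * ((1 + x + y) ^ Suc p - 1)"
    using diff_top by (simp add: algebra_simps)
  also have "\<dots> \<le> real k * y * (real (Suc p) * (x + y) * (1 + x + y) ^ p)"
    using diff_lower assms by (intro mult_left_mono) auto
  also have "\<dots> \<le> real k * y * (real k * (x + y) * 3 ^ k)"
    using power_le_3k assms k by (intro mult_left_mono mult_mono) auto
  also have "\<dots> = real k ^ 2 * 3 ^ k * (y * (x + y))"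
    by (simp add: power2_eq_square algebra_simps)
  finally show ?thesis by simp
qed

lemma eval2_gpoly_diagonal:
  assumes "2 \<le> k" "0 \<le> t" "t \<le> 1"
  shows "1 \<le> eval2 t t (gpoly k)" "eval2 t t (gpoly k) \<le> exp (2 * real k ^ 2 * 3 ^ k * t ^ 2)"
proof -
  show "1 \<le> eval2 t t (gpoly k)"
    using coeff_le_eval2[of "gpoly k" t t 0 0] sloped_gpoly[of k] assms(2)
    unfolding sloped_def by (simp add: coeff_gpoly)
  have "eval2 t t (gpoly k) \<le> 1 + 2 * real k ^ 2 * 3 ^ k * t ^ 2"
    unfolding eval2_gpoly using g_near_origin[of t t k] assms by (simp add: power2_eq_square)
  also have "\<dots> \<le> exp (2 * real k ^ 2 * 3 ^ k * t ^ 2)"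
    by (rule exp_ge_add_one_self)
  finally show "eval2 t t (gpoly k) \<le> exp (2 * real k ^ 2 * 3 ^ k * t ^ 2)" .
qed

lemma exponent_scaling_le:
  fixes t :: real
  assumes "j \<le> k" "0 < k" "real n * t ^ 2 \<le> real b"
  shows "real (n * j div k) * t ^ 2 \<le> real b"
proof -
  have "(n * j div k) * k \<le> n * j"
    by (rule div_times_less_eq_dividend)
  then have "real (n * j div k) * real k * t ^ 2 \<le> real n * real j * t ^ 2"
    by (intro mult_right_mono) (simp_all only: of_nat_mult[symmetric] of_nat_le_iff zero_le_power2)
  also have "\<dots> = real j * (real n * t ^ 2)"
    by (simp add: mult_ac)
  also have "\<dots> \<le> real k * real b"
    using assms(1,3) by (intro mult_mono) auto
  finally show ?thesis
    using assms(2) by (simp add: mult.commute mult_le_cancel_left)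
qed

lemma Scoef_le_exp:
  fixes t :: real
  assumes "2 \<le> j" "j \<le> k" "0 < t" "t \<le> 1" "real n * t ^ 2 \<le> real b"
  shows "real_of_int (Scoef n j k a b) * t ^ (j * (a + b)) \<le> exp (2 * real k ^ 2 * 3 ^ k) ^ b"
proof -
  define K where "K = 2 * real k ^ 2 * 3 ^ k"
  define N where "N = n * j div k"
  have "real_of_int (Scoef n j k a b) * t ^ (j * (a + b)) \<le> eval2 t t (gpoly k) ^ N"
    using Scoef_le_eval[of t t n j k a b] assms(3)
    unfolding N_def by (simp add: add_mult_distrib2 power_add mult_ac)
  also have "\<dots> \<le> exp (K * t ^ 2) ^ N"
    using eval2_gpoly_diagonal[of k t] assms unfolding K_def by (intro power_mono) auto
  also have "\<dots> = exp (K * (real N * t ^ 2))"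
    by (simp add: exp_of_nat_mult[symmetric] mult_ac)
  also have "\<dots> \<le> exp (K * real b)"
    using exponent_scaling_le[of j k n t b] assms unfolding N_def K_def
    by (intro exp_le_cancel_iff[THEN iffD2] mult_left_mono) auto
  also have "\<dots> = exp K ^ b"
    by (simp add: exp_of_nat_mult[symmetric] mult.commute)
  finally show ?thesis
    unfolding K_def .
qed

lemma fact_lower: "(fact d :: real) * real d ^ t \<le> fact (d + t)"
proof (induction t)
  case 0
  then show ?case by simp
next
  case (Suc t)
  have "(fact d :: real) * real d ^ Suc t = (fact d * real d ^ t) * real d" by simp
  also have "\<dots> \<le> fact (d + t) * real (Suc (d + t))"
    using Suc by (intro mult_mono) auto
  also have "\<dots> = fact (d + Suc t)" by (simp add: algebra_simps)
  finally show ?case .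
qed

lemma fact_upper: "(fact (d + t) :: real) \<le> fact d * real (d + t) ^ t"
proof (induction t)
  case 0
  then show ?case by simp
next
  case (Suc t)
  have "(fact (d + Suc t) :: real) = fact (d + t) * real (d + Suc t)" by (simp add: algebra_simps)
  also have "\<dots> \<le> (fact d * real (d + t) ^ t) * real (d + Suc t)"
    using Suc by (intro mult_mono) auto
  also have "\<dots> \<le> (fact d * real (d + Suc t) ^ t) * real (d + Suc t)"
    by (intro mult_mono mult_left_mono power_mono) auto
  also have "\<dots> = fact d * real (d + Suc t) ^ Suc t" by (simp add: algebra_simps)
  finally show ?case .
qed

lemma trinom_upper:
  assumes "a + b \<le> n"
  shows "trinom n a b \<le> real n ^ (a + b) / (fact a * fact b)"
proof -
  have "(fact n :: real) \<le> fact (n - (a + b)) * real n ^ (a + b)"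
    using fact_upper[of "n - (a + b)" "a + b"] assms by simp
  then show ?thesis
    unfolding trinom_def by (simp add: field_simps)
qed

lemma trinom_lower:
  assumes "a + b \<le> n"
  shows "real (n - (a + b)) ^ (a + b) / (fact a * fact b) \<le> trinom n a b"
proof -
  have "(fact (n - (a + b)) :: real) * real (n - (a + b)) ^ (a + b) \<le> fact n"
    using fact_lower[of "n - (a + b)" "a + b"] assms by simp
  then show ?thesis
    unfolding trinom_def by (simp add: field_simps)
qed

lemma fact_mult_le:
  assumes "1 \<le> j" "a \<le> s"
  shows "(fact (j * a) :: real) \<le> fact a * real (j * s) ^ ((j - 1) * a)"
proof -
  have "j * a = a + (j - 1) * a"
    using assms by (simp add: algebra_simps)
  then have "(fact (j * a) :: real) \<le> fact a * real (j * a) ^ ((j - 1) * a)"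
    using fact_upper[of a "(j - 1) * a"] by simp
  also have "\<dots> \<le> fact a * real (j * s) ^ ((j - 1) * a)"
    using assms by (intro mult_left_mono power_mono) auto
  finally show ?thesis .
qed

lemma trinom_scaled_lower:
  assumes "1 \<le> j" "2 * (a + b) \<le> n"
  shows "(real n * real j / 2) ^ (j * (a + b))
      / (fact a * fact b * real (j * (a + b)) ^ ((j - 1) * (a + b)))
    \<le> trinom (n * j) (j * a) (j * b)"
proof -
  define s where "s = a + b"
  define h where "h = real n * real j / 2"
  define F where "F = fact a * fact b * real (j * s) ^ ((j - 1) * s)"
  have F0: "0 < F"
    unfolding F_def using assms(1) by (cases "s = 0") auto
  have js: "j * a + j * b = j * s"
    unfolding s_def by (simp add: add_mult_distrib2)
  have js_le: "2 * (j * s) \<le> n * j"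
    using assms(2) unfolding s_def by (metis mult.commute mult.left_commute mult_le_mono2)
  have "F = (fact a * real (j * s) ^ ((j - 1) * a)) * (fact b * real (j * s) ^ ((j - 1) * b))"
    unfolding F_def s_def by (simp only: add_mult_distrib2 power_add mult_ac)
  then have "(fact (j * a) * fact (j * b) :: real) \<le> F"
    using fact_mult_le[OF assms(1), of a s] fact_mult_le[OF assms(1), of b s]
    unfolding s_def by (simp add: mult_mono)
  then have "h ^ (j * s) / F \<le> h ^ (j * s) / (fact (j * a) * fact (j * b))"
    unfolding h_def using F0 by (intro divide_left_mono) auto
  also have "\<dots> \<le> real (n * j - (j * a + j * b)) ^ (j * a + j * b) / (fact (j * a) * fact (j * b))"
  proof -
    have "real (j * s) \<le> real (n * j) / 2" "j * s \<le> n * j"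
      using js_le by linarith+
    then have "h \<le> real (n * j - (j * a + j * b))"
      unfolding h_def js by (simp add: mult.commute)
    then have "h ^ (j * s) \<le> real (n * j - (j * a + j * b)) ^ (j * a + j * b)"
      unfolding js h_def by (intro power_mono) auto
    then show ?thesis
      by (rule divide_right_mono) simp
  qed
  also have "\<dots> \<le> trinom (n * j) (j * a) (j * b)"
    using js_le js by (intro trinom_lower) linarith
  finally show ?thesis
    unfolding h_def F_def s_def .
qed

lemma trinom_ratio_le:
  assumes "1 \<le> j" "0 < n" "2 * (a + b) \<le> n"
  shows "trinom n a b / trinom (n * j) (j * a) (j * b)
    \<le> (real n * real (j * (a + b)) ^ (j - 1) / (real n * real j / 2) ^ j) ^ (a + b)"
proof -
  define s where "s = a + b"
  define h where "h = real n * real j / 2"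
  define F where "F = fact a * fact b * real (j * s) ^ ((j - 1) * s)"
  have h0: "0 < h" unfolding h_def using assms by simp
  have F0: "0 < F"
    unfolding F_def using assms(1) by (cases "s = 0") auto
  have "trinom n a b / trinom (n * j) (j * a) (j * b) \<le> (real n ^ s / (fact a * fact b)) / (h ^ (j * s) / F)"
    using trinom_upper[of a b n] trinom_scaled_lower[of j a b n] assms h0 F0
    unfolding s_def h_def F_def by (intro frac_le) (auto simp: trinom_def)
  also have "\<dots> = (real n * real (j * s) ^ (j - 1) / h ^ j) ^ s"
    using h0 by (simp add: F_def power_divide power_mult_distrib power_mult[symmetric] mult_ac)
  finally show ?thesis
    unfolding s_def h_def .
qed

text \<open>If s <= k n t^2 then R / t^j is of order t; this is where j >= 3 is needed.\<close>

lemma growth_factor_le: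
  fixes n s t :: real and j k :: nat
  assumes "3 \<le> j" "1 \<le> k" "0 < n" "0 < t" "t \<le> 1" "0 \<le> s" "s \<le> real k * n * t ^ 2"
  shows "n * (real j * s) ^ (j - 1) / (n * real j / 2) ^ j / t ^ j \<le> 2 ^ j * real k ^ j * t"
proof -
  define i where "i = j - 3"
  have j: "j = Suc (Suc (Suc i))"
    using assms(1) unfolding i_def by simp
  have "n * (real j * s) ^ (j - 1) / (n * real j / 2) ^ j / t ^ j
      \<le> n * (real j * real k * n * t ^ 2) ^ (j - 1) / (n * real j / 2) ^ j / t ^ j"
    using assms by (intro divide_right_mono mult_left_mono power_mono) auto
  also have "\<dots> = 2 ^ j * real k ^ (j - 1) * t ^ (j - 2) / real j"
  proof -
    define c where "c = real j"
    have "0 < c" unfolding c_def using assms(1) by simp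
    then have "n * (c * real k * n * t ^ 2) ^ Suc (Suc i) / (n * c / 2) ^ Suc (Suc (Suc i))
        / t ^ Suc (Suc (Suc i)) = 2 ^ Suc (Suc (Suc i)) * real k ^ Suc (Suc i) * t ^ Suc i / c"
      using assms(3,4) by (simp add: field_simps power2_eq_square)
    then show ?thesis
      unfolding c_def by (simp add: j)
  qed
  also have "\<dots> \<le> 2 ^ j * real k ^ j * t"
  proof -
    have "real k ^ (j - 1) \<le> real k ^ j"
      using assms(2) by (intro power_increasing) auto
    moreover have "t ^ (j - 2) \<le> t ^ 1"
      using assms(4,5) j by (intro power_decreasing) auto
    ultimately have "2 ^ j * real k ^ (j - 1) * t ^ (j - 2) \<le> 2 ^ j * real k ^ j * t"
      using assms(4) by (intro mult_mono) auto
    moreover have "2 ^ j * real k ^ (j - 1) * t ^ (j - 2) / real j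
        \<le> 2 ^ j * real k ^ (j - 1) * t ^ (j - 2) / 1"
      using assms(1,4) by (intro divide_left_mono) auto
    ultimately show ?thesis by linarith
  qed
  finally show ?thesis .
qed

definition decay_const :: "nat \<Rightarrow> nat \<Rightarrow> real" where
  "decay_const j k = exp (2 * real k ^ 2 * 3 ^ k) * 2 ^ j * real k ^ j"

lemma Eavg_le_factored:
  fixes R E t :: real
  assumes ratio: "trinom n a b / trinom (n * j) (j * a) (j * b) \<le> R ^ (a + b)" and "0 \<le> R"
    and coeff: "real_of_int (Scoef n j k a b) * t ^ (j * (a + b)) \<le> E ^ (a + b)" and "0 < t"
  shows "Eavg n j k a b \<le> (E * (R / t ^ j)) ^ (a + b)"
proof -
  have "Eavg n j k a b = trinom n a b / trinom (n * j) (j * a) (j * b) * real_of_int (Scoef n j k a b)"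
    unfolding Eavg_def by simp
  also have "\<dots> \<le> R ^ (a + b) * (E ^ (a + b) / t ^ (j * (a + b)))"
    using assms Scoef_nonneg[of n j k a b]
    by (intro mult_mono) (auto simp: trinom_def pos_le_divide_eq)
  also have "\<dots> = (E * (R / t ^ j)) ^ (a + b)"
    by (simp add: power_mult power_divide power_mult_distrib)
  finally show ?thesis .
qed

lemma Eavg_le_power:
  assumes "3 \<le> j" "j \<le> k" "1 \<le> b" "a \<le> (k - 1) * b" "2 * k * b \<le> n"
  shows "Eavg n j k a b \<le> (decay_const j k * sqrt (real b / real n)) ^ (a + b)"
proof -
  define s where "s = a + b"
  define t where "t = sqrt (real b / real n)"
  define E where "E = exp (2 * real k ^ 2 * 3 ^ k)"
  define R where "R = real n * real (j * s) ^ (j - 1) / (real n * real j / 2) ^ j"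
  have kb: "b \<le> k * b" using assms(1,2) by simp
  then have bn: "b \<le> n" "0 < n" using assms(3,5) by linarith+
  have t0: "0 < t" and t1: "t \<le> 1" and bt: "real n * t ^ 2 = real b"
    unfolding t_def using bn assms(3) by simp_all
  have "a \<le> k * b - b"
    using assms(4) by (simp add: diff_mult_distrib)
  then have sk: "s \<le> k * b"
    using kb unfolding s_def by arith
  have "real_of_int (Scoef n j k a b) * t ^ (j * s) \<le> E ^ b"
    unfolding s_def E_def using Scoef_le_exp[of j k t n b a] assms t0 t1 bt by simp
  also have "\<dots> \<le> E ^ s"
    unfolding s_def E_def by (intro power_increasing) auto
  finally have coeff: "real_of_int (Scoef n j k a b) * t ^ (j * s) \<le> E ^ s" .
  have ratio: "trinom n a b / trinom (n * j) (j * a) (j * b) \<le> R ^ s"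
    unfolding R_def s_def using trinom_ratio_le[of j n a b] assms(1,5) bn sk s_def by simp
  have "real s \<le> real k * real n * t ^ 2"
    using sk unfolding mult.assoc bt by (metis of_nat_le_iff of_nat_mult)
  then have "R / t ^ j \<le> 2 ^ j * real k ^ j * t"
    using growth_factor_le[of j k "real n" t "real s"] assms bn t0 t1 unfolding R_def by simp
  then have "E * (R / t ^ j) \<le> E * (2 ^ j * real k ^ j * t)"
    unfolding E_def by (rule mult_left_mono) simp
  also have "\<dots> = decay_const j k * t"
    unfolding decay_const_def E_def by (simp add: mult_ac)
  finally have growth: "E * (R / t ^ j) \<le> decay_const j k * t" .
  have R0: "0 \<le> R" unfolding R_def by simp
  have "Eavg n j k a b \<le> (E * (R / t ^ j)) ^ (a + b)"
    using Eavg_le_factored[OF ratio[unfolded s_def] R0 coeff[unfolded s_def] t0] .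
  also have "\<dots> \<le> (decay_const j k * t) ^ (a + b)"
    using growth R0 t0 unfolding E_def by (intro power_mono) auto
  finally show ?thesis
    unfolding t_def .
qed

lemma Eavg_nonneg: "0 \<le> Eavg n j k a b"
  unfolding Eavg_def trinom_def using Scoef_nonneg[of n j k a b] by simp

lemma inner_sum_le:
  assumes "3 \<le> j" "j \<le> k" "1 \<le> b" "2 * k * b \<le> n"
    and small: "decay_const j k * sqrt (real b / real n) \<le> 1 / 2"
  shows "(\<Sum>a = 0..n - b. Eavg n j k a b) \<le> 2 * (decay_const j k * sqrt (real b / real n)) ^ b"
proof -
  define z where "z = decay_const j k * sqrt (real b / real n)"
  have z0: "0 \<le> z" unfolding z_def decay_const_def by simp
  have z_half: "z \<le> 1 / 2" using small unfolding z_def .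
  have summand: "Eavg n j k a b \<le> z ^ b * (1 / 2) ^ a" for a
  proof (cases "a \<le> (k - 1) * b")
    case True
    then have "Eavg n j k a b \<le> z ^ b * z ^ a"
      using Eavg_le_power[of j k b a n] assms unfolding z_def by (simp add: power_add mult.commute)
    also have "\<dots> \<le> z ^ b * (1 / 2) ^ a"
      using z0 z_half by (intro mult_left_mono power_mono) auto
    finally show ?thesis .
  next
    case False
    then have "(k - 1) * (j * b) < j * a"
      using assms(1) by (simp add: mult.left_commute)
    then have "Eavg n j k a b = 0" unfolding Eavg_def by (simp add: Scoef_vanish)
    then show ?thesis using z0 by simp
  qed
  have "(\<Sum>a = 0..n - b. (1 / 2 :: real) ^ a) \<le> (\<Sum>a. (1 / 2) ^ a)"
    by (intro sum_le_suminf summable_geometric) auto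
  also have "\<dots> = 2"
    by (simp add: suminf_geometric)
  finally have geometric: "(\<Sum>a = 0..n - b. (1 / 2 :: real) ^ a) \<le> 2" .
  have "(\<Sum>a = 0..n - b. Eavg n j k a b) \<le> z ^ b * (\<Sum>a = 0..n - b. (1 / 2) ^ a)"
    unfolding sum_distrib_left by (intro sum_mono summand)
  also have "\<dots> \<le> z ^ b * 2"
    using z0 geometric by (intro mult_left_mono) auto
  finally show ?thesis
    unfolding z_def by (simp add: mult.commute)
qed

lemma weighted_geometric_le: "(\<Sum>b = 1..B. real b * (1 / 2) ^ (b - 1)) \<le> 4"
proof -
  have "(\<Sum>b = 1..B. real b * (1 / 2 :: real) ^ (b - 1)) = (\<Sum>i<B. real (Suc i) * (1 / 2) ^ i)"
    using sum.atLeast1_atMost_eq[of "\<lambda>b. real b * (1 / 2 :: real) ^ (b - 1)" B] by simp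
  also have "\<dots> \<le> (\<Sum>i. real (Suc i) * (1 / 2) ^ i)"
    using geometric_deriv_sums[of "1 / 2 :: real"] by (intro sum_le_suminf) (auto simp: sums_iff)
  also have "\<dots> = 4"
    using geometric_deriv_sums[of "1 / 2 :: real"] by (simp add: sums_iff power2_eq_square)
  finally show ?thesis .
qed

lemma tail_sum_le:
  fixes c :: real
  assumes "0 < n" "0 \<le> c" "\<And>b. b \<in> {1..B} \<Longrightarrow> c * sqrt (real b / real n) \<le> 1 / 2"
  shows "(\<Sum>b = 1..B. (c * sqrt (real b / real n)) ^ b) \<le> 4 * c / sqrt (real n)"
proof -
  have summand: "(c * sqrt (real b / real n)) ^ b
      \<le> c / sqrt (real n) * (real b * (1 / 2) ^ (b - 1))" if b: "b \<in> {1..B}" for b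
  proof -
    define z where "z = c * sqrt (real b / real n)"
    have z0: "0 \<le> z" unfolding z_def using assms(2) by simp
    have "z ^ b = z * z ^ (b - 1)"
      using b by (simp add: power_eq_if)
    also have "\<dots> \<le> z * (1 / 2) ^ (b - 1)"
      using z0 assms(3)[OF b] unfolding z_def by (intro mult_left_mono power_mono) auto
    also have "\<dots> \<le> c * real b / sqrt (real n) * (1 / 2) ^ (b - 1)"
    proof -
      have "sqrt (real b) \<le> sqrt (real b * real b)"
        using b by (intro real_sqrt_le_mono) simp
      then have "sqrt (real b) \<le> real b"
        by simp
      then have "z \<le> c * real b / sqrt (real n)"
        unfolding z_def using assms(1,2) by (simp add: real_sqrt_divide divide_right_mono mult_left_mono)
      then show ?thesis by (intro mult_right_mono) auto
    qed
    finally show ?thesis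
      unfolding z_def by (simp add: mult_ac)
  qed
  have "(\<Sum>b = 1..B. (c * sqrt (real b / real n)) ^ b)
      \<le> c / sqrt (real n) * (\<Sum>b = 1..B. real b * (1 / 2) ^ (b - 1))"
    unfolding sum_distrib_left by (intro sum_mono summand)
  also have "\<dots> \<le> c / sqrt (real n) * 4"
    using assms(1,2) weighted_geometric_le by (intro mult_left_mono) auto
  finally show ?thesis by (simp add: mult.commute)
qed

lemma small_block_conditions:
  fixes c \<delta> :: real
  assumes "0 < n" and \<delta>: "\<delta> * (2 * real k + 4 * c ^ 2) \<le> 1" and b: "real b \<le> \<delta> * real n"
  shows "2 * k * b \<le> n" "c * sqrt (real b / real n) \<le> 1 / 2"
proof -
  define X where "X = 2 * real k + 4 * c ^ 2"
  have "real b * X \<le> (\<delta> * real n) * X"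
    using b unfolding X_def by (rule mult_right_mono) simp
  also have "\<dots> = (\<delta> * X) * real n"
    by (simp only: mult_ac)
  also have "\<dots> \<le> real n"
    using mult_right_mono[OF \<delta>[folded X_def], of "real n"] by simp
  finally have bound: "real b * X \<le> real n" .
  have "2 * real k * real b \<le> real b * X"
    unfolding X_def by (simp add: algebra_simps)
  then have "real (2 * k * b) \<le> real n"
    using bound by simp
  then show "2 * k * b \<le> n"
    by (simp only: of_nat_le_iff)
  have "4 * (c ^ 2 * real b) \<le> real b * X"
    unfolding X_def by (simp add: algebra_simps)
  then have "c ^ 2 * real b / real n \<le> 1 / 4"
    using bound assms(1) by (simp add: divide_le_eq)
  moreover have "(c * sqrt (real b / real n)) ^ 2 = c ^ 2 * real b / real n"
    by (simp add: power_mult_distrib)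
  ultimately have "(c * sqrt (real b / real n)) ^ 2 \<le> (1 / 2) ^ 2"
    by (simp add: power2_eq_square)
  then show "c * sqrt (real b / real n) \<le> 1 / 2"
    by (rule power2_le_imp_le) simp
qed

lemma block_sum_le:
  assumes "3 \<le> j" "j \<le> k" "0 < n" and \<delta>: "\<delta> * (2 * real k + 4 * decay_const j k ^ 2) \<le> 1"
  shows "(\<Sum>b = 1..nat \<lfloor>\<delta> * real n\<rfloor>. \<Sum>a = 0..n - b. Eavg n j k a b)
    \<le> 8 * decay_const j k / sqrt (real n)"
proof -
  define c where "c = decay_const j k"
  define B where "B = nat \<lfloor>\<delta> * real n\<rfloor>"
  have c0: "0 \<le> c" unfolding c_def decay_const_def by simp
  have conditions: "2 * k * b \<le> n" "c * sqrt (real b / real n) \<le> 1 / 2" if "b \<in> {1..B}" for b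
  proof -
    have "int b \<le> \<lfloor>\<delta> * real n\<rfloor>"
      using that unfolding B_def by (cases "0 \<le> \<lfloor>\<delta> * real n\<rfloor>") (auto simp: le_nat_iff)
    then have "real b \<le> \<delta> * real n"
      by linarith
    then show "2 * k * b \<le> n" "c * sqrt (real b / real n) \<le> 1 / 2"
      using small_block_conditions[OF assms(3) \<delta>[folded c_def]] by blast+
  qed
  have "(\<Sum>b = 1..B. \<Sum>a = 0..n - b. Eavg n j k a b)
      \<le> (\<Sum>b = 1..B. 2 * (c * sqrt (real b / real n)) ^ b)"
    using conditions assms(1,2) unfolding c_def by (intro sum_mono inner_sum_le) auto
  also have "\<dots> \<le> 2 * (4 * c / sqrt (real n))"
    unfolding sum_distrib_left[symmetric] using tail_sum_le[of n c B] assms(3) c0 conditions by simp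
  finally show ?thesis
    unfolding B_def c_def by simp
qed

lemma block_sum_tendsto_zero:
  assumes "3 \<le> j" "j \<le> k" and \<delta>: "\<delta> * (2 * real k + 4 * decay_const j k ^ 2) \<le> 1"
  shows "(\<lambda>m. let n = k * m in
      \<Sum>b = 1..nat \<lfloor>\<delta> * real n\<rfloor>. \<Sum>a = 0..n - b. Eavg n j k a b) \<longlonglongrightarrow> 0"
    (is "?f \<longlonglongrightarrow> 0")
proof (rule tendsto_sandwich[of "\<lambda>_. 0" ?f _ "\<lambda>m. 8 * decay_const j k / sqrt (real m)"])
  have "?f m \<le> 8 * decay_const j k / sqrt (real m)" if "1 \<le> m" for m
  proof -
    have "?f m \<le> 8 * decay_const j k / sqrt (real (k * m))"
      using block_sum_le[of j k "k * m" \<delta>] assms that by (simp add: Let_def)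
    also have "\<dots> \<le> 8 * decay_const j k / sqrt (real m)"
      using assms that by (intro divide_left_mono) (auto simp: decay_const_def)
    finally show ?thesis .
  qed
  then show "\<forall>\<^sub>F m in sequentially. ?f m \<le> 8 * decay_const j k / sqrt (real m)"
    unfolding eventually_sequentially by blast
  show "\<forall>\<^sub>F m in sequentially. 0 \<le> ?f m"
    by (intro always_eventually allI) (simp add: Let_def sum_nonneg Eavg_nonneg)
  show "(\<lambda>m. 8 * decay_const j k / sqrt (real m)) \<longlonglongrightarrow> 0"
    by (intro tendsto_divide_0[OF tendsto_const] filterlim_at_top_imp_at_infinity
        filterlim_compose[OF sqrt_at_top filterlim_real_sequentially])
qed simp

theorem mainTheorem14:
  fixes j k :: nat
  assumes "3 \<le> j" and "j < k"
  shows "\<exists>\<delta>::real. \<delta> > 0 \<and>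
    (\<lambda>m. let n = k * m in
        \<Sum>b = 1..nat \<lfloor>\<delta> * real n\<rfloor>. \<Sum>a = 0..n - b. Eavg n j k a b)
    \<longlonglongrightarrow> 0"
proof -
  define \<delta> where "\<delta> = 1 / (2 * real k + 4 * decay_const j k ^ 2)"
  have "0 < 2 * real k + 4 * decay_const j k ^ 2"
    using assms by (simp add: add_pos_nonneg)
  then have "0 < \<delta>" and "\<delta> * (2 * real k + 4 * decay_const j k ^ 2) \<le> 1"
    unfolding \<delta>_def by simp_all
  then show ?thesis
    using block_sum_tendsto_zero[of j k \<delta>] assms by auto
qed

end
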